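(* Let $c\ge0$, $d>0$, $\beta\ge0$, $\alpha\in\mathbb{R}$ and $p_{(\alpha,\beta)}(\omega):=(\alpha-\omega^2)(c-id\omega-\omega^2)-\beta\omega^2$. Then: (i) If $\alpha<0$, then $p_{(\alpha,\beta)}$ has at least two roots of the form $i\mu$, $\mu\in\mathbb{R}$, where $\mu>0$ for exactly one root and $\mu\le0$ ($\mu<0$ if $c>0$) for at least one root. (ii) If $\alpha>0$, then all roots of $p_{(\alpha,\beta)}$ of the form $i\mu$, $\mu\in\mathbb{R}$, satisfy $\mu\le0$ ($\mu<0$ if $c>0$). If $d<2\sqrt{c}$ there is no purely imaginary root, and if $d\ge2\sqrt{\beta+c}$ there are at least two purely imaginary roots. *)

theory Defs
  imports Complex_Main "HOL-Computational_Algebra.Polynomial"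
begin

definition ppoly :: "real \<Rightarrow> real \<Rightarrow> real \<Rightarrow> real \<Rightarrow> complex poly" where
  "ppoly c d \<alpha> \<beta> =
     [:complex_of_real \<alpha>, 0, -1:] * [:complex_of_real c, - \<i> * complex_of_real d, -1:]
     - [:0, 0, complex_of_real \<beta>:]"

end

theory Submission
  imports Defs
begin

text \<open>On the imaginary axis \<open>\<omega> = \<i>\<mu>\<close> the polynomial \<open>p\<^sub>(\<^sub>\<alpha>\<^sub>,\<^sub>\<beta>\<^sub>)\<close> takes the real value
  \<open>(\<alpha> + \<mu>\<^sup>2)(\<mu>\<^sup>2 + d\<mu> + c) + \<beta>\<mu>\<^sup>2\<close>, so all claims are about the real zeros of this quartic.
  The second factor is positive for \<open>\<mu> > 0\<close>, and dividing by it shows that a positive zero solves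
  \<open>\<alpha> + \<mu>\<^sup>2 + \<beta>\<mu>\<^sup>2/(\<mu>\<^sup>2 + d\<mu> + c) = 0\<close>, whose left side is strictly increasing; this gives uniqueness.
  Existence of zeros comes from the intermediate value theorem, since the quartic is positive
  for large \<open>|\<mu>|\<close> and equals \<open>\<alpha>c\<close> at \<open>0\<close>. For \<open>d \<ge> 2\<surd>(\<beta> + c)\<close> its value at \<open>-d/2\<close> is at most
  \<open>-\<alpha>\<beta>\<close>; either this is negative, giving two zeros, or \<open>\<beta> = 0\<close> and \<open>d\<^sup>2 = 4c\<close>, where
  \<open>-\<i>d/2\<close> is a double root.\<close>

definition ppoly_imag :: "real \<Rightarrow> real \<Rightarrow> real \<Rightarrow> real \<Rightarrow> real \<Rightarrow> real" where
  "ppoly_imag c d \<alpha> \<beta> \<mu> = (\<alpha> + \<mu>\<^sup>2) * (\<mu>\<^sup>2 + d * \<mu> + c) + \<beta> * \<mu>\<^sup>2"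

lemma poly_ppoly_imag:
  "poly (ppoly c d \<alpha> \<beta>) (\<i> * complex_of_real \<mu>) = complex_of_real (ppoly_imag c d \<alpha> \<beta> \<mu>)"
  by (simp add: ppoly_def ppoly_imag_def complex_eq_iff algebra_simps power2_eq_square)

lemma continuous_on_ppoly_imag: "continuous_on S (ppoly_imag c d \<alpha> \<beta>)"
  unfolding ppoly_imag_def by (intro continuous_intros)

lemma ppoly_imag_pos:
  assumes "\<alpha> + \<mu>\<^sup>2 > 0" and "\<mu>\<^sup>2 + d * \<mu> + c > 0" and "\<beta> \<ge> 0"
  shows "ppoly_imag c d \<alpha> \<beta> \<mu> > 0"
  using assms unfolding ppoly_imag_def by (simp add: add_pos_nonneg)

lemma ppoly_imag_pos_large:
  assumes "c \<ge> 0" and "d \<ge> 0" and "\<beta> \<ge> 0" and large: "\<bar>\<mu>\<bar> \<ge> sqrt \<bar>\<alpha>\<bar> + d + 1"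
  shows "ppoly_imag c d \<alpha> \<beta> \<mu> > 0"
proof (rule ppoly_imag_pos)
  have "\<bar>\<alpha>\<bar> < (sqrt \<bar>\<alpha>\<bar> + d + 1)\<^sup>2"
    using \<open>d \<ge> 0\<close> by (simp add: power2_eq_square algebra_simps add_pos_nonneg)
  also have "\<dots> \<le> \<mu>\<^sup>2"
    using large \<open>d \<ge> 0\<close> by (metis abs_ge_zero add_nonneg_nonneg le_add_same_cancel2
        power2_abs power_mono real_sqrt_ge_zero zero_le_one order_trans)
  finally show "\<alpha> + \<mu>\<^sup>2 > 0" by linarith
  have "\<mu>\<^sup>2 + d * \<mu> \<ge> \<bar>\<mu>\<bar> * (\<bar>\<mu>\<bar> - d)"
    using \<open>d \<ge> 0\<close> by (cases "\<mu> \<ge> 0") (auto simp: power2_eq_square algebra_simps)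
  moreover have "\<bar>\<mu>\<bar> * (\<bar>\<mu>\<bar> - d) > 0"
    using large \<open>d \<ge> 0\<close> by (smt (verit) mult_pos_pos real_sqrt_ge_zero abs_ge_zero)
  ultimately show "\<mu>\<^sup>2 + d * \<mu> + c > 0" using \<open>c \<ge> 0\<close> by linarith
qed (fact \<open>\<beta> \<ge> 0\<close>)

lemma quadratic_pos_of_discriminant_neg:
  fixes d c \<mu> :: real
  assumes "d\<^sup>2 < 4 * c"
  shows "\<mu>\<^sup>2 + d * \<mu> + c > 0"
proof -
  have "\<mu>\<^sup>2 + d * \<mu> + c = (\<mu> + d / 2)\<^sup>2 + (c - d\<^sup>2 / 4)"
    by (simp add: power2_eq_square algebra_simps)
  then show ?thesis using assms zero_le_power2[of "\<mu> + d / 2"] by linarith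
qed

lemma square_div_quadratic_mono:
  fixes c d m n :: real
  assumes "c \<ge> 0" and "d \<ge> 0" and "0 < m" and "m \<le> n"
  shows "m\<^sup>2 / (m\<^sup>2 + d * m + c) \<le> n\<^sup>2 / (n\<^sup>2 + d * n + c)"
proof -
  have "d * m * n * (m - n) \<le> 0" and "c * (m\<^sup>2 - n\<^sup>2) \<le> 0"
    using assms by (auto simp: mult_nonneg_nonpos power_mono)
  then have "m\<^sup>2 * (n\<^sup>2 + d * n + c) \<le> n\<^sup>2 * (m\<^sup>2 + d * m + c)"
    by (simp add: algebra_simps power2_eq_square)
  moreover have "m\<^sup>2 + d * m + c > 0" and "n\<^sup>2 + d * n + c > 0"
    using assms by (simp_all add: add_pos_nonneg)
  ultimately show ?thesis by (simp add: divide_simps)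
qed

lemma ppoly_imag_positive_root_unique:
  assumes "c \<ge> 0" and "d \<ge> 0" and "\<beta> \<ge> 0"
    and "0 < m" and "ppoly_imag c d \<alpha> \<beta> m = 0"
    and "0 < n" and "ppoly_imag c d \<alpha> \<beta> n = 0"
  shows "m = n"
proof -
  define f where "f \<mu> = \<alpha> + \<mu>\<^sup>2 + \<beta> * (\<mu>\<^sup>2 / (\<mu>\<^sup>2 + d * \<mu> + c))" for \<mu>
  have root_iff: "ppoly_imag c d \<alpha> \<beta> \<mu> = 0 \<longleftrightarrow> f \<mu> = 0" if "\<mu> > 0" for \<mu>
  proof -
    have "\<mu>\<^sup>2 + d * \<mu> + c > 0" using that assms by (simp add: add_pos_nonneg)
    then show ?thesis unfolding ppoly_imag_def f_def by (simp add: field_simps)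
  qed
  have f_less: "f x < f y" if "0 < x" "x < y" for x y
  proof -
    have "x\<^sup>2 < y\<^sup>2" using that by (simp add: power_strict_mono)
    moreover have "\<beta> * (x\<^sup>2 / (x\<^sup>2 + d * x + c)) \<le> \<beta> * (y\<^sup>2 / (y\<^sup>2 + d * y + c))"
      using that assms by (intro mult_left_mono square_div_quadratic_mono) auto
    ultimately show ?thesis unfolding f_def by linarith
  qed
  have "f m = 0" and "f n = 0" using assms root_iff by auto
  then show ?thesis using f_less \<open>0 < m\<close> \<open>0 < n\<close> by (metis less_irrefl linorder_neqE_linordered_idom)
qed

lemma ppoly_imag_positive_root_exists:
  assumes "c \<ge> 0" and "d > 0" and "\<beta> \<ge> 0" and "\<alpha> < 0"
  shows "\<exists>\<mu> > 0. ppoly_imag c d \<alpha> \<beta> \<mu> = 0"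
proof -
  define R where "R = sqrt \<bar>\<alpha>\<bar> + d + 1"
  have "R > 0" and q_R: "ppoly_imag c d \<alpha> \<beta> R > 0"
    using assms by (auto simp: R_def intro!: ppoly_imag_pos_large add_nonneg_pos)
  show ?thesis
  proof (cases "c = 0")
    case True
    \<comment> \<open>Then \<open>0\<close> is a root; divide it out and apply the intermediate value theorem to the cofactor.\<close>
    define r where "r \<mu> = (\<alpha> + \<mu>\<^sup>2) * (\<mu> + d) + \<beta> * \<mu>" for \<mu>
    have q_r: "ppoly_imag c d \<alpha> \<beta> \<mu> = \<mu> * r \<mu>" for \<mu>
      unfolding ppoly_imag_def r_def True by (simp add: power2_eq_square algebra_simps)
    have "r 0 < 0" using assms by (simp add: r_def mult_neg_pos)
    moreover have "r R > 0" using q_R q_r[of R] \<open>R > 0\<close> by (simp add: zero_less_mult_iff)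
    moreover have "continuous_on {0..R} r" unfolding r_def by (intro continuous_intros)
    ultimately obtain \<mu> where "0 \<le> \<mu>" "\<mu> \<le> R" "r \<mu> = 0"
      using IVT'[of r 0 0 R] \<open>R > 0\<close> by auto
    then show ?thesis using \<open>r 0 < 0\<close> q_r by (metis less_le mult_zero_right)
  next
    case False
    then have q_0: "ppoly_imag c d \<alpha> \<beta> 0 < 0"
      using assms by (simp add: ppoly_imag_def mult_neg_pos)
    obtain \<mu> where "0 \<le> \<mu>" "\<mu> \<le> R" "ppoly_imag c d \<alpha> \<beta> \<mu> = 0"
      using IVT'[of "ppoly_imag c d \<alpha> \<beta>" 0 0 R] q_0 q_R \<open>R > 0\<close> continuous_on_ppoly_imag by fastforce
    then show ?thesis using q_0 by (metis less_le)
  qed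
qed

lemma ppoly_imag_negative_root_exists:
  assumes "c > 0" and "d \<ge> 0" and "\<beta> \<ge> 0" and "\<alpha> < 0"
  shows "\<exists>\<mu> < 0. ppoly_imag c d \<alpha> \<beta> \<mu> = 0"
proof -
  define R where "R = sqrt \<bar>\<alpha>\<bar> + d + 1"
  have "R > 0" and q_R: "ppoly_imag c d \<alpha> \<beta> (- R) > 0"
    using assms by (auto simp: R_def intro!: ppoly_imag_pos_large add_nonneg_pos)
  have q_0: "ppoly_imag c d \<alpha> \<beta> 0 < 0"
    using assms by (simp add: ppoly_imag_def mult_neg_pos)
  obtain \<mu> where "- R \<le> \<mu>" "\<mu> \<le> 0" "ppoly_imag c d \<alpha> \<beta> \<mu> = 0"
    using IVT2'[of "ppoly_imag c d \<alpha> \<beta>" 0 0 "- R"] q_0 q_R \<open>R > 0\<close> continuous_on_ppoly_imag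
    by fastforce
  then show ?thesis using q_0 by (metis less_le)
qed

lemma ppoly_critically_damped:
  "ppoly (d\<^sup>2 / 4) d \<alpha> 0 = - [:complex_of_real \<alpha>, 0, -1:] * [:\<i> * complex_of_real d / 2, 1:]\<^sup>2"
  by (simp add: ppoly_def power2_eq_square algebra_simps complex_eq_iff)

lemma ppoly_critically_damped_double_root:
  "order (\<i> * complex_of_real (- d / 2)) (ppoly (d\<^sup>2 / 4) d \<alpha> 0) \<ge> 2"
proof -
  let ?z = "\<i> * complex_of_real (- d / 2)"
  have "[:complex_of_real \<alpha>, 0, -1:] \<noteq> 0" and "[:\<i> * complex_of_real d / 2, 1:]\<^sup>2 \<noteq> 0"
    by simp_all
  then have nonzero: "ppoly (d\<^sup>2 / 4) d \<alpha> 0 \<noteq> 0"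
    unfolding ppoly_critically_damped by (simp only: mult_eq_0_iff neg_equal_0_iff_equal) simp
  have "[:- ?z, 1:] = [:\<i> * complex_of_real d / 2, 1:]" by simp
  then have "[:- ?z, 1:] ^ 2 dvd ppoly (d\<^sup>2 / 4) d \<alpha> 0"
    unfolding ppoly_critically_damped by (metis dvd_triv_right)
  then show ?thesis using nonzero order_divides[of ?z 2] by blast
qed

lemma ppoly_two_imag_roots:
  assumes "c \<ge> 0" and "d \<ge> 0" and "\<beta> \<ge> 0" and "\<alpha> > 0" and "4 * (\<beta> + c) \<le> d\<^sup>2"
  shows "\<exists>\<mu>1 \<mu>2. ppoly_imag c d \<alpha> \<beta> \<mu>1 = 0 \<and> ppoly_imag c d \<alpha> \<beta> \<mu>2 = 0
           \<and> (\<mu>1 \<noteq> \<mu>2 \<or> order (\<i> * complex_of_real \<mu>1) (ppoly c d \<alpha> \<beta>) \<ge> 2)"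
proof -
  let ?q = "ppoly_imag c d \<alpha> \<beta>"
  define h where "h = - d / 2"
  have h_factor: "h\<^sup>2 + d * h + c = c - d\<^sup>2 / 4"
    unfolding h_def by (simp add: power2_eq_square algebra_simps)
  have "\<alpha> + h\<^sup>2 > 0" using assms zero_le_power2[of h] by linarith
  moreover have "c - d\<^sup>2 / 4 \<le> - \<beta>" using assms by simp
  ultimately have "(\<alpha> + h\<^sup>2) * (c - d\<^sup>2 / 4) \<le> (\<alpha> + h\<^sup>2) * (- \<beta>)" by (intro mult_left_mono) auto
  then have q_h: "?q h \<le> - \<alpha> * \<beta>" unfolding ppoly_imag_def h_factor by (simp add: algebra_simps)
  show ?thesis
  proof (cases "?q h < 0")
    case True
    define R where "R = sqrt \<bar>\<alpha>\<bar> + d + 1"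
    have "sqrt \<bar>\<alpha>\<bar> \<ge> 0" by simp
    then have "h \<ge> - R" using assms unfolding h_def R_def by linarith
    moreover have "?q (- R) > 0"
      using assms by (auto simp: R_def intro!: ppoly_imag_pos_large)
    ultimately obtain \<mu>1 where "\<mu>1 \<le> h" "?q \<mu>1 = 0"
      using IVT2'[of ?q h 0 "- R"] True continuous_on_ppoly_imag by fastforce
    moreover have "?q 0 \<ge> 0" using assms by (simp add: ppoly_imag_def)
    then obtain \<mu>2 where "h \<le> \<mu>2" "?q \<mu>2 = 0"
      using IVT'[of ?q h 0 0] True assms continuous_on_ppoly_imag by (fastforce simp: h_def)
    ultimately show ?thesis using True by (metis order_antisym_conv less_irrefl)
  next
    case False
    then have "\<alpha> * \<beta> \<le> 0" using q_h by linarith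
    then have "\<beta> = 0" using assms by (simp add: mult_le_0_iff)
    moreover have "?q h = 0" using False q_h \<open>\<beta> = 0\<close> by simp
    ultimately have "c = d\<^sup>2 / 4"
      using \<open>\<alpha> + h\<^sup>2 > 0\<close> unfolding ppoly_imag_def h_factor by simp
    then have "ppoly c d \<alpha> \<beta> = ppoly (d\<^sup>2 / 4) d \<alpha> 0" using \<open>\<beta> = 0\<close> by (simp only:)
    then have "order (\<i> * complex_of_real h) (ppoly c d \<alpha> \<beta>) \<ge> 2"
      using ppoly_critically_damped_double_root[of d \<alpha>] unfolding h_def by simp
    then show ?thesis using \<open>?q h = 0\<close> by blast
  qed
qed

lemma ppoly_imag_roots_of_neg_alpha:
  assumes "c \<ge> 0" and "d > 0" and "\<beta> \<ge> 0" and "\<alpha> < 0"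
  shows "(\<exists>!\<mu>. \<mu> > 0 \<and> ppoly_imag c d \<alpha> \<beta> \<mu> = 0)"
    and "\<exists>\<mu> \<le> 0. ppoly_imag c d \<alpha> \<beta> \<mu> = 0"
    and "c > 0 \<Longrightarrow> \<exists>\<mu> < 0. ppoly_imag c d \<alpha> \<beta> \<mu> = 0"
proof -
  show "\<exists>!\<mu>. \<mu> > 0 \<and> ppoly_imag c d \<alpha> \<beta> \<mu> = 0"
    using ppoly_imag_positive_root_exists[OF assms]
      ppoly_imag_positive_root_unique[OF assms(1) less_imp_le[OF assms(2)] assms(3)] by blast
  show negative: "\<exists>\<mu> < 0. ppoly_imag c d \<alpha> \<beta> \<mu> = 0" if "c > 0"
    using ppoly_imag_negative_root_exists[OF that less_imp_le[OF assms(2)] assms(3-4)] .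
  show "\<exists>\<mu> \<le> 0. ppoly_imag c d \<alpha> \<beta> \<mu> = 0"
  proof (cases "c = 0")
    case True
    then show ?thesis by (auto simp: ppoly_imag_def)
  next
    case False
    then show ?thesis using negative assms(1) by (auto intro: less_imp_le)
  qed
qed

lemma ppoly_imag_roots_of_pos_alpha:
  assumes "c \<ge> 0" and "d \<ge> 0" and "\<beta> \<ge> 0" and "\<alpha> > 0"
    and root: "ppoly_imag c d \<alpha> \<beta> \<mu> = 0"
  shows "\<mu> \<le> 0" and "c > 0 \<Longrightarrow> \<mu> < 0" and "4 * c \<le> d\<^sup>2"
proof -
  have nonpos: "\<mu>\<^sup>2 + d * \<mu> + c \<le> 0"
    using ppoly_imag_pos[of \<alpha> \<mu> d c \<beta>] root assms zero_le_power2[of \<mu>] by linarith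
  show "4 * c \<le> d\<^sup>2"
    using nonpos quadratic_pos_of_discriminant_neg[of d c \<mu>] by linarith
  show "\<mu> \<le> 0"
  proof (rule ccontr)
    assume "\<not> \<mu> \<le> 0"
    then have "\<mu>\<^sup>2 + d * \<mu> + c > 0" using assms by (simp add: add_pos_nonneg)
    then show False using nonpos by simp
  qed
  then show "\<mu> < 0" if "c > 0"
    using nonpos that by (cases "\<mu> = 0") auto
qed

theorem lemma3p1:
  fixes c d \<alpha> \<beta> :: real
  assumes "c \<ge> 0" and "d > 0" and "\<beta> \<ge> 0"
  defines "P \<equiv> ppoly c d \<alpha> \<beta>"
  shows "(\<alpha> < 0 \<longrightarrow>
            (\<exists>!\<mu>. \<mu> > 0 \<and> poly P (\<i> * complex_of_real \<mu>) = 0)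
          \<and> (\<exists>\<mu>. \<mu> \<le> 0 \<and> poly P (\<i> * complex_of_real \<mu>) = 0)
          \<and> (c > 0 \<longrightarrow> (\<exists>\<mu>. \<mu> < 0 \<and> poly P (\<i> * complex_of_real \<mu>) = 0)))
       \<and> (\<alpha> > 0 \<longrightarrow>
            (\<forall>\<mu>. poly P (\<i> * complex_of_real \<mu>) = 0 \<longrightarrow> \<mu> \<le> 0)
          \<and> (c > 0 \<longrightarrow> (\<forall>\<mu>. poly P (\<i> * complex_of_real \<mu>) = 0 \<longrightarrow> \<mu> < 0))
          \<and> (d < 2 * sqrt c \<longrightarrow> (\<forall>\<mu>. poly P (\<i> * complex_of_real \<mu>) \<noteq> 0))
          \<and> (d \<ge> 2 * sqrt (\<beta> + c) \<longrightarrow>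
               (\<exists>\<mu>1 \<mu>2. poly P (\<i> * complex_of_real \<mu>1) = 0 \<and> poly P (\<i> * complex_of_real \<mu>2) = 0
                  \<and> (\<mu>1 \<noteq> \<mu>2 \<or> order (\<i> * complex_of_real \<mu>1) P \<ge> 2))))"
proof -
  have root_iff: "poly P (\<i> * complex_of_real \<mu>) = 0 \<longleftrightarrow> ppoly_imag c d \<alpha> \<beta> \<mu> = 0" for \<mu>
    unfolding P_def poly_ppoly_imag by simp
  have d_nonneg: "d \<ge> 0" using assms(2) by simp
  note neg = ppoly_imag_roots_of_neg_alpha[OF assms(1-3)]
  note pos = ppoly_imag_roots_of_pos_alpha[OF assms(1) d_nonneg assms(3)]
  have no_root: "ppoly_imag c d \<alpha> \<beta> \<mu> \<noteq> 0" if "\<alpha> > 0" and "d < 2 * sqrt c" for \<mu>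
  proof
    assume "ppoly_imag c d \<alpha> \<beta> \<mu> = 0"
    then have "4 * c \<le> d\<^sup>2" by (rule pos(3)[OF that(1)])
    moreover have "d\<^sup>2 < (2 * sqrt c)\<^sup>2" using that d_nonneg by (intro power_strict_mono) auto
    ultimately show False using assms by (simp add: power_mult_distrib)
  qed
  have two: "\<exists>\<mu>1 \<mu>2. ppoly_imag c d \<alpha> \<beta> \<mu>1 = 0 \<and> ppoly_imag c d \<alpha> \<beta> \<mu>2 = 0
      \<and> (\<mu>1 \<noteq> \<mu>2 \<or> order (\<i> * complex_of_real \<mu>1) P \<ge> 2)"
    if "\<alpha> > 0" and "d \<ge> 2 * sqrt (\<beta> + c)"
  proof -
    have "(2 * sqrt (\<beta> + c))\<^sup>2 \<le> d\<^sup>2" using that assms by (intro power_mono) auto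
    then show ?thesis
      using ppoly_two_imag_roots[OF assms(1) d_nonneg assms(3) that(1)] assms
      by (simp add: P_def power_mult_distrib)
  qed
  show ?thesis
    unfolding root_iff using neg pos(1,2) no_root two by blast
qed

end
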